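(* With probability at least $1-o_n(1)$, $\mathbf f\sim\mathcal D^{J}_{\mathrm{no}}$ is $0.2$-far from every $(n/2)$-junta, i.e. $\Pr_x[\mathbf f(x)\ne g(x)]\ge 0.2$ for every $g:\{0,1\}^n\to\{0,1\}$ depending on at most $n/2$ coordinates.
   Context: Let $n$ be even and $a=n/2$. For a set $A$ of size $a$ and $z\in\{0,1\}^A$ with Hamming weight $|z|$: $h^{(-,0)}(z)=1$ iff $|z|>a/2+0.05\sqrt a$; $h^{(-,1)}(z)=1$ iff $|z|<a/2-0.05\sqrt a$. A draw $\mathbf f\sim\mathcal D^{J}_{\mathrm{no}}$: choose $\mathbf A\subseteq[n]$ uniformly of size $a$, $\mathbf C=[n]\setminus\mathbf A$, and a uniformly random function $\mathbf b:\{0,1\}^{\mathbf C}\to\{0,1\}$; set $\mathbf f(x)=h^{(-,\mathbf b(x_{\mathbf C}))}(x_{\mathbf A})$, where $x_B$ is the restriction of $x$ to $B$. *)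

theory Defs
  imports "HOL-Probability.Probability"
begin

text \<open>Points of the cube {0,1}^n are encoded as subsets x of {..<n}
  (coordinate i is 1 iff i is in x).  Restriction x_B is x \<inter> B, and the
  Hamming weight of x_A is card (x \<inter> A).\<close>

definition cube :: "nat \<Rightarrow> nat set set" where
  "cube n = Pow {..<n}"

definition h_minus :: "nat \<Rightarrow> bool \<Rightarrow> nat set \<Rightarrow> bool" where
  "h_minus a i z =
     (if \<not> i then real (card z) > real a / 2 + 0.05 * sqrt (real a)
      else real (card z) < real a / 2 - 0.05 * sqrt (real a))"

definition noFun :: "nat \<Rightarrow> nat set \<Rightarrow> (nat set \<Rightarrow> bool) \<Rightarrow> nat set \<Rightarrow> bool" where
  "noFun n A b x = h_minus (n div 2) (b (x \<inter> ({..<n} - A))) (x \<inter> A)"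

definition D_no :: "nat \<Rightarrow> (nat set \<Rightarrow> bool) pmf" where
  "D_no n =
     do { A \<leftarrow> pmf_of_set {A. A \<subseteq> {..<n} \<and> card A = n div 2};
          b \<leftarrow> pmf_of_set (Pow ({..<n} - A) \<rightarrow>\<^sub>E (UNIV :: bool set));
          return_pmf (noFun n A b) }"

definition is_junta :: "nat \<Rightarrow> nat \<Rightarrow> (nat set \<Rightarrow> bool) \<Rightarrow> bool" where
  "is_junta n k g = (\<exists>J. J \<subseteq> {..<n} \<and> card J \<le> k \<and>
      (\<forall>x\<in>cube n. \<forall>y\<in>cube n. x \<inter> J = y \<inter> J \<longrightarrow> g x = g y))"

definition rel_dist :: "nat \<Rightarrow> (nat set \<Rightarrow> bool) \<Rightarrow> (nat set \<Rightarrow> bool) \<Rightarrow> real" where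
  "rel_dist n f g = real (card {x \<in> cube n. f x \<noteq> g x}) / 2 ^ n"

definition far_from_juntas :: "nat \<Rightarrow> real \<Rightarrow> nat \<Rightarrow> (nat set \<Rightarrow> bool) \<Rightarrow> bool" where
  "far_from_juntas n eps k f = (\<forall>g. is_junta n k g \<longrightarrow> rel_dist n f g \<ge> eps)"

end

theory Submission
  imports Defs "HOL-Real_Asymp.Real_Asymp"
begin

text \<open>Let C be the complement of the m-set A in {..<2m}. By the central binomial bound, for
  at least 90% of the points z of the cube on A the weight of z lies off the band
  m/2 +- 0.05 sqrt m; there h^(-,0) and h^(-,1) disagree, and so do h^(-,i) at z and at its
  complement A - z. A junta g on at most m coordinates either misses some c in C, and then
  disagrees with f at one end of every edge in direction c along which b changes, or its
  coordinates are exactly C, and then it disagrees with f at x or at x with its A-part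
  complemented. The first case needs every c in C to be influential for b: the number of edges
  in direction c along which a uniformly random b changes is Binomial(2^(m-1), 1/2), so by
  Hoeffding's inequality and a union bound over C this fails with probability at most
  m exp (-2^m / 400).\<close>

section \<open>Central binomial coefficients\<close>

lemma central_binomial_Suc:
  "Suc k * (2 * Suc k choose Suc k) = 2 * (2 * k + 1) * (2 * k choose k)"
proof -
  have sym: "Suc (2 * k) choose k = Suc (2 * k) choose Suc k"
    using binomial_symmetric[of k "Suc (2 * k)"] by (simp del: binomial_Suc_Suc)
  have "Suc k * (Suc k * (2 * Suc k choose Suc k))
          = Suc k * (Suc (Suc (2 * k)) * (Suc (2 * k) choose k))"
    using Suc_times_binomial[of k "Suc (2 * k)"] by (simp del: binomial_Suc_Suc)
  also have "\<dots> = Suc (Suc (2 * k)) * (Suc k * (Suc (2 * k) choose Suc k))"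
    unfolding sym by (simp only: ac_simps)
  also have "\<dots> = Suc k * (2 * (2 * k + 1) * (2 * k choose k))"
    by (simp only: Suc_times_binomial) (simp del: binomial_Suc_Suc)
  finally show ?thesis
    by (simp only: mult_cancel1) simp
qed

lemma central_binomial_sq_le: "real (2 * k choose k)^2 * (3 * k + 1) \<le> 16^k"
proof (induction k)
  case 0
  then show ?case by simp
next
  case (Suc k)
  define c where "c = real (2 * k choose k)"
  define d where "d = real (2 * Suc k choose Suc k)"
  have step: "(real k + 1) * d = 2 * (2 * k + 1) * c"
    using arg_cong[OF central_binomial_Suc[of k], of real] unfolding c_def d_def
    by (simp del: binomial_Suc_Suc mult_Suc_right add: algebra_simps)
  have "(real k + 1)^2 * (d^2 * (3 * k + 4)) = 4 * c^2 * ((2 * real k + 1)^2 * (3 * k + 4))"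
    using arg_cong[OF step, of "\<lambda>t. t^2 * (3 * k + 4)"] by (simp add: power2_eq_square algebra_simps)
  also have "\<dots> \<le> 4 * c^2 * (4 * (real k + 1)^2 * (3 * k + 1))"
    by (intro mult_left_mono) (simp_all add: power2_eq_square algebra_simps)
  also have "\<dots> = 16 * (real k + 1)^2 * (c^2 * (3 * k + 1))"
    by (simp add: algebra_simps)
  also have "\<dots> \<le> 16 * (real k + 1)^2 * 16^k"
    using Suc.IH unfolding c_def by (intro mult_left_mono) simp_all
  finally have "d^2 * (3 * k + 4) \<le> 16^Suc k"
    by (simp add: mult_le_cancel_left_pos)
  then show ?case
    unfolding d_def by (simp del: binomial_Suc_Suc mult_Suc_right add: algebra_simps)
qed

text \<open>The constant matters: the middle band of width 0.1 sqrt m has to carry less than 10% of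
  the cube, which needs a bound c 4^m with c < 1 (asymptotically c = 2/pi).\<close>
lemma binomial_middle_sq_le: "real (m choose (m div 2))^2 * (3 * m) \<le> 2 * 4^m"
proof (cases "even m")
  case True
  then obtain k where m: "m = 2 * k" by blast
  have "real (2 * k choose k)^2 * (3 * m) \<le> 2 * (real (2 * k choose k)^2 * (3 * k + 1))"
    unfolding m by (simp add: algebra_simps)
  also have "\<dots> \<le> 2 * 16^k"
    using central_binomial_sq_le[of k] by simp
  also have "(16::real)^k = 4^m"
    unfolding m by (simp add: power_mult)
  finally show ?thesis
    using m by simp
next
  case False
  then obtain k where m: "m = 2 * k + 1" using oddE by blast
  have double: "2 * Suc k choose Suc k = 2 * (m choose k)"
  proof -
    have "2 * Suc k choose Suc k = (Suc (2 * k) choose k) + (Suc (2 * k) choose Suc k)"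
      by simp
    also have "Suc (2 * k) choose Suc k = Suc (2 * k) choose k"
      using binomial_symmetric[of k "Suc (2 * k)"] by (simp del: binomial_Suc_Suc)
    finally show ?thesis
      using m by simp
  qed
  have "(16::real)^Suc k = 4 * 4^m"
    unfolding m by (simp add: power_mult)
  then have "real (m choose k)^2 * (3 * k + 4) \<le> 4^m"
    using central_binomial_sq_le[of "Suc k"] unfolding double
    by (simp add: algebra_simps del: binomial_Suc_Suc)
  moreover have "real (m choose k)^2 * (3 * m) \<le> 2 * (real (m choose k)^2 * (3 * k + 4))"
    unfolding m by (simp add: algebra_simps)
  ultimately have "real (m choose k)^2 * (3 * m) \<le> 2 * 4^m"
    by linarith
  then show ?thesis
    using m by simp
qed

section \<open>The middle layers\<close>

definition off_middle :: "nat \<Rightarrow> nat set \<Rightarrow> bool" where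
  "off_middle m z \<longleftrightarrow> 0.05 * sqrt (real m) < \<bar>real (card z) - real m / 2\<bar>"

lemma h_minus_index_differ:
  assumes "off_middle a z" "i \<noteq> j"
  shows "h_minus a i z \<noteq> h_minus a j z"
proof -
  define t where "t = 0.05 * sqrt (real a)"
  have "t \<ge> 0"
    unfolding t_def by simp
  then show ?thesis
    using assms unfolding off_middle_def h_minus_def t_def[symmetric]
    by (cases i; cases j) (auto simp: abs_if split: if_split_asm)
qed

lemma h_minus_complement_differ:
  assumes "off_middle a z" "card z + card z' = a"
  shows "h_minus a i z \<noteq> h_minus a i z'"
proof -
  define t where "t = 0.05 * sqrt (real a)"
  have "t \<ge> 0"
    unfolding t_def by simp
  moreover have "real (card z') = real a - real (card z)"
    using assms(2) by linarith
  ultimately show ?thesis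
    using assms(1) unfolding off_middle_def h_minus_def t_def[symmetric]
    by (cases i) (auto simp: abs_if split: if_split_asm)
qed

lemma card_nat_set_le_diameter:
  fixes K :: "nat set"
  assumes "finite K" "\<And>a b. a \<in> K \<Longrightarrow> b \<in> K \<Longrightarrow> real b - real a \<le> w" "w \<ge> 0"
  shows "real (card K) \<le> w + 1"
proof (cases "K = {}")
  case True
  then show ?thesis using assms by simp
next
  case False
  have K: "Min K \<in> K" "Max K \<in> K" "K \<subseteq> {Min K..Max K}"
    using False assms(1) by auto
  then have "Min K \<le> Max K"
    by auto
  have "card K \<le> Suc (Max K) - Min K"
    using K card_mono[of "{Min K..Max K}" K] by simp
  also have "real (Suc (Max K) - Min K) = real (Max K) - real (Min K) + 1"
    using \<open>Min K \<le> Max K\<close> by (simp add: of_nat_diff)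
  also have "\<dots> \<le> w + 1"
    using assms(2)[OF K(1,2)] by simp
  finally show ?thesis
    by simp
qed

lemma card_middle_subsets_le:
  assumes "finite A" "card A = m"
  shows "real (card {z. z \<subseteq> A \<and> \<not> off_middle m z}) \<le> (0.1 * sqrt m + 1) * real (m choose (m div 2))"
proof -
  define t where "t = 0.05 * sqrt (real m)"
  define K where "K = {k. k \<le> m \<and> real m / 2 - t \<le> real k \<and> real k \<le> real m / 2 + t}"
  have "finite K"
    unfolding K_def by auto
  have "{z. z \<subseteq> A \<and> \<not> off_middle m z} = (\<Union>k\<in>K. {z. z \<subseteq> A \<and> card z = k})"
    using card_mono[OF assms(1)] assms(2) unfolding K_def off_middle_def t_def[symmetric] by force
  then have "card {z. z \<subseteq> A \<and> \<not> off_middle m z} \<le> (\<Sum>k\<in>K. card {z. z \<subseteq> A \<and> card z = k})"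
    using card_UN_le[OF \<open>finite K\<close>] by simp
  also have "\<dots> = (\<Sum>k\<in>K. m choose k)"
    using n_subsets[OF assms(1)] assms(2) by simp
  also have "\<dots> \<le> card K * (m choose (m div 2))"
    using sum_mono[of K "\<lambda>k. m choose k" "\<lambda>_. m choose (m div 2)"] binomial_maximum by simp
  finally have "real (card {z. z \<subseteq> A \<and> \<not> off_middle m z}) \<le> real (card K) * real (m choose (m div 2))"
    by (metis of_nat_le_iff of_nat_mult)
  moreover have "real (card K) \<le> 0.1 * sqrt m + 1"
    by (rule card_nat_set_le_diameter[OF \<open>finite K\<close>]) (auto simp: K_def t_def)
  ultimately show ?thesis
    by (meson mult_right_mono of_nat_0_le_iff order_trans)
qed

lemma middle_band_small:
  assumes "m \<ge> 10000"
  shows "(0.1 * sqrt m + 1) * real (m choose (m div 2)) \<le> 0.1 * 2^m"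
proof -
  define s where "s = sqrt (real m)"
  define c where "c = real (m choose (m div 2))"
  have "s \<ge> 100"
    unfolding s_def using real_sqrt_le_mono[of 10000 "real m"] assms by simp
  have "s * (s - 40) \<ge> 100 * 60"
    using \<open>s \<ge> 100\<close> by (intro mult_mono) auto
  then have poly: "2 * (0.1 * s + 1)^2 \<le> 0.03 * s^2"
    by (simp add: power2_eq_square algebra_simps)
  have "((0.1 * s + 1) * c)^2 * (3 * s^2) = (0.1 * s + 1)^2 * (c^2 * (3 * m))"
    unfolding s_def by (simp add: power2_eq_square algebra_simps)
  also have "\<dots> \<le> (0.1 * s + 1)^2 * (2 * 4^m)"
    using binomial_middle_sq_le[of m] unfolding c_def by (intro mult_left_mono) simp_all
  also have "\<dots> \<le> (0.03 * s^2) * 4^m"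
    using poly by simp
  also have "\<dots> = (0.1 * 2^m)^2 * (3 * s^2)"
    by (simp add: power2_eq_square power_mult_distrib flip: power_mult_distrib)
  finally have "((0.1 * s + 1) * c)^2 \<le> (0.1 * 2^m)^2"
    using \<open>s \<ge> 100\<close> by (simp add: mult_le_cancel_right)
  then show ?thesis
    unfolding s_def c_def by (rule power2_le_imp_le) simp
qed

lemma card_off_middle_subsets_ge:
  assumes "finite A" "card A = m" "m \<ge> 10000"
  shows "0.9 * 2^m \<le> real (card {z. z \<subseteq> A \<and> off_middle m z})"
proof -
  have "Pow A = {z. z \<subseteq> A \<and> off_middle m z} \<union> {z. z \<subseteq> A \<and> \<not> off_middle m z}"
    by auto
  then have "card (Pow A) = card {z. z \<subseteq> A \<and> off_middle m z} + card {z. z \<subseteq> A \<and> \<not> off_middle m z}"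
    using assms(1) by (simp add: card_Un_disjoint disjoint_iff)
  then have "2^m = card {z. z \<subseteq> A \<and> off_middle m z} + card {z. z \<subseteq> A \<and> \<not> off_middle m z}"
    using assms(1,2) by (simp add: card_Pow)
  then have "(2::real)^m = card {z. z \<subseteq> A \<and> off_middle m z} + card {z. z \<subseteq> A \<and> \<not> off_middle m z}"
    by (metis of_nat_add of_nat_numeral of_nat_power)
  then show ?thesis
    using card_middle_subsets_le[OF assms(1,2)] middle_band_small[OF assms(3)] by linarith
qed

section \<open>Counting disagreements by swapping\<close>

lemma card_le_disagreements_if_swap_outside:
  assumes "finite U" "S \<subseteq> U"
    and "\<And>x. x \<in> S \<Longrightarrow> \<sigma> x \<in> U - S \<and> \<sigma> (\<sigma> x) = x \<and> f x \<noteq> f (\<sigma> x) \<and> g x = g (\<sigma> x)"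
  shows "card S \<le> card {x\<in>U. f x \<noteq> g x}"
proof -
  define E where "E = {x\<in>U. f x \<noteq> g x}"
  have "finite E"
    using assms(1) unfolding E_def by simp
  have "S \<subseteq> (E \<inter> S) \<union> \<sigma> ` (E - S)"
  proof
    fix x assume "x \<in> S"
    with assms(2) assms(3)[of x] have "x \<in> E \<or> (\<sigma> x \<in> E - S \<and> x = \<sigma> (\<sigma> x))"
      unfolding E_def by auto
    with \<open>x \<in> S\<close> show "x \<in> (E \<inter> S) \<union> \<sigma> ` (E - S)"
      by blast
  qed
  then have "card S \<le> card (E \<inter> S) + card (\<sigma> ` (E - S))"
    by (intro order_trans[OF card_mono card_Un_le]) (use \<open>finite E\<close> in auto)
  also have "\<dots> \<le> card (E \<inter> S) + card (E - S)"
    using \<open>finite E\<close> card_image_le[of "E - S" \<sigma>] by simp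
  also have "\<dots> = card E"
    using card_Int_Diff[OF \<open>finite E\<close>, of S] by simp
  finally show ?thesis
    unfolding E_def .
qed

lemma card_le_twice_disagreements_if_swap:
  assumes "finite U" "S \<subseteq> U"
    and "\<And>x. x \<in> S \<Longrightarrow> \<sigma> x \<in> U \<and> \<sigma> (\<sigma> x) = x \<and> f x \<noteq> f (\<sigma> x) \<and> g x = g (\<sigma> x)"
  shows "card S \<le> 2 * card {x\<in>U. f x \<noteq> g x}"
proof -
  define E where "E = {x\<in>U. f x \<noteq> g x}"
  have "finite E"
    using assms(1) unfolding E_def by simp
  have "S \<subseteq> E \<union> \<sigma> ` E"
  proof
    fix x assume "x \<in> S"
    with assms(2) assms(3)[of x] have "x \<in> E \<or> (\<sigma> x \<in> E \<and> x = \<sigma> (\<sigma> x))"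
      unfolding E_def by auto
    then show "x \<in> E \<union> \<sigma> ` E"
      by blast
  qed
  then have "card S \<le> card E + card (\<sigma> ` E)"
    by (intro order_trans[OF card_mono card_Un_le]) (use \<open>finite E\<close> in auto)
  also have "\<dots> \<le> 2 * card E"
    using \<open>finite E\<close> card_image_le[of E \<sigma>] by simp
  finally show ?thesis
    unfolding E_def .
qed

lemma card_subsets_Un_split:
  assumes "A \<inter> C = {}"
  shows "card {x. x \<subseteq> A \<union> C \<and> P (x \<inter> C) \<and> Q (x \<inter> A)}
           = card {y. y \<subseteq> C \<and> P y} * card {z. z \<subseteq> A \<and> Q z}"
proof -
  define Y where "Y = {y. y \<subseteq> C \<and> P y}"
  define Z where "Z = {z. z \<subseteq> A \<and> Q z}"
  have split: "(y \<union> z) \<inter> C = y \<and> (y \<union> z) \<inter> A = z" if "y \<subseteq> C" "z \<subseteq> A" for y z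
    using that assms by auto
  have "bij_betw (\<lambda>(y, z). y \<union> z) (Y \<times> Z) {x. x \<subseteq> A \<union> C \<and> P (x \<inter> C) \<and> Q (x \<inter> A)}"
    by (rule bij_betwI[where g = "\<lambda>x. (x \<inter> C, x \<inter> A)"]) (use split in \<open>auto simp: Y_def Z_def\<close>)
  then show ?thesis
    by (simp add: bij_betw_same_card[symmetric] card_cartesian_product Y_def Z_def)
qed

section \<open>Influence of a coordinate\<close>

definition influence_count :: "'a set \<Rightarrow> 'a \<Rightarrow> ('a set \<Rightarrow> bool) \<Rightarrow> nat" where
  "influence_count C c b = card {y. y \<subseteq> C \<and> c \<in> y \<and> b y \<noteq> b (y - {c})}"

lemma pmf_of_set_PiE_bool:
  assumes "finite I"
  shows "pmf_of_set (I \<rightarrow>\<^sub>E (UNIV :: bool set)) = Pi_pmf I undefined (\<lambda>_. bernoulli_pmf (1/2))"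
proof -
  have "Pi_pmf I undefined (\<lambda>_. bernoulli_pmf (1/2)) = pmf_of_set (PiE_dflt I undefined (\<lambda>_. UNIV))"
    using assms by (simp add: bernoulli_pmf_half_conv_pmf_of_set Pi_pmf_of_set)
  also have "PiE_dflt I undefined (\<lambda>_. UNIV) = (I \<rightarrow>\<^sub>E (UNIV :: bool set))"
    by (auto simp: PiE_dflt_def PiE_def extensional_def)
  finally show ?thesis
    by simp
qed

lemma card_subsets_containing:
  assumes "finite C" "c \<in> C"
  shows "card {y. y \<subseteq> C \<and> c \<in> y} = 2^(card C - 1)"
proof -
  have "bij_betw (insert c) (Pow (C - {c})) {y. y \<subseteq> C \<and> c \<in> y}"
    by (rule bij_betwI[where g = "\<lambda>y. y - {c}"]) (use assms(2) in auto)
  then show ?thesis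
    using assms by (simp add: bij_betw_same_card[symmetric] card_Pow)
qed

text \<open>Replacing \<open>b y\<close> by \<open>b y \<noteq> b (y - {c})\<close> for every \<open>y\<close> containing \<open>c\<close> is a bijection of
  the functions on \<open>Pow C\<close>; it turns the influence count into the number of such \<open>y\<close> with
  value \<open>True\<close>.\<close>
lemma influence_count_binomial:
  assumes "finite C" "c \<in> C"
  shows "map_pmf (influence_count C c) (pmf_of_set (Pow C \<rightarrow>\<^sub>E (UNIV :: bool set)))
           = binomial_pmf (2^(card C - 1)) (1/2)"
proof -
  define F where "F = Pow C \<rightarrow>\<^sub>E (UNIV :: bool set)"
  define T where "T = {y. y \<subseteq> C \<and> c \<in> y}"
  define \<Phi> where "\<Phi> = (\<lambda>b y. if y \<in> Pow C then (if c \<in> y then b y \<noteq> b (y - {c}) else b y) else undefined)"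
  have "\<Phi> b \<in> F" for b
    unfolding \<Phi>_def F_def by auto
  moreover have "\<Phi> (\<Phi> b) = b" if "b \<in> F" for b
    using that unfolding \<Phi>_def F_def by (auto simp: PiE_def extensional_def)
  ultimately have "bij_betw \<Phi> F F"
    by (intro bij_betwI[where g = \<Phi>]) auto
  moreover have "finite F" "F \<noteq> {}"
    unfolding F_def using assms(1) by (simp_all add: finite_PiE PiE_eq_empty_iff)
  ultimately have uniform: "map_pmf \<Phi> (pmf_of_set F) = Pi_pmf (Pow C) undefined (\<lambda>_. bernoulli_pmf (1/2))"
    using map_pmf_of_set_bij_betw pmf_of_set_PiE_bool assms(1) unfolding F_def by (metis finite_Pow_iff)
  have "influence_count C c b = card {y \<in> T. \<Phi> b y}" for b
    unfolding influence_count_def T_def \<Phi>_def by (rule arg_cong[where f = card]) auto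
  then have "influence_count C c = (\<lambda>b. card {y \<in> T. b y}) \<circ> \<Phi>"
    by auto
  then have "map_pmf (influence_count C c) (pmf_of_set F)
               = map_pmf (\<lambda>b. card {y \<in> T. b y}) (Pi_pmf (Pow C) undefined (\<lambda>_. bernoulli_pmf (1/2)))"
    by (simp add: pmf.map_comp flip: uniform)
  also have "\<dots> = map_pmf (\<lambda>b. card {y \<in> T. b y}) (Pi_pmf T undefined (\<lambda>_. bernoulli_pmf (1/2)))"
  proof -
    have "(\<lambda>b. card {y \<in> T. b y}) \<circ> (\<lambda>b y. if y \<in> T then b y else undefined) = (\<lambda>b. card {y \<in> T. b y})"
      unfolding comp_def by (intro ext arg_cong[where f = card] Collect_cong) auto
    then show ?thesis
      using assms(1) by (subst Pi_pmf_subset[of "Pow C" T]) (auto simp: T_def pmf.map_comp)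
  qed
  also have "\<dots> = binomial_pmf (2^(card C - 1)) (1/2)"
    using card_subsets_containing[OF assms] assms(1)
    by (intro binomial_pmf_altdef'[symmetric]) (auto simp: T_def)
  finally show ?thesis
    unfolding F_def .
qed

lemma prob_low_influence_le:
  assumes "finite C" "c \<in> C"
  shows "measure_pmf.prob (pmf_of_set (Pow C \<rightarrow>\<^sub>E (UNIV :: bool set)))
           {b. real (influence_count C c b) < 0.45 * 2^(card C - 1)} \<le> exp (- (2^card C) / 400)"
proof -
  define N :: nat where "N = 2^(card C - 1)"
  have "N > 0" "(2::real)^card C = 2 * N"
    using assms card_gt_0_iff[of C] unfolding N_def by (auto simp flip: power_Suc)
  have "measure_pmf.prob (pmf_of_set (Pow C \<rightarrow>\<^sub>E (UNIV :: bool set)))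
           {b. real (influence_count C c b) < 0.45 * N}
        = measure_pmf.prob (map_pmf (influence_count C c) (pmf_of_set (Pow C \<rightarrow>\<^sub>E UNIV)))
            {k. real k < 0.45 * N}"
    by (simp add: measure_map_pmf vimage_def)
  also have "\<dots> = measure_pmf.prob (binomial_pmf N (1/2)) {k. real k < 0.45 * N}"
    unfolding influence_count_binomial[OF assms] N_def ..
  also have "\<dots> \<le> measure_pmf.prob (binomial_pmf N (1/2)) {k. real k \<le> N * (1/2) - 0.05 * N}"
    by (intro measure_pmf.finite_measure_mono) auto
  also have "\<dots> \<le> exp (- 2 * (0.05 * N)^2 / N)"
    by (rule binomial_distribution.prob_le) (use \<open>N > 0\<close> in \<open>unfold_locales, auto\<close>)
  also have "- 2 * (0.05 * N)^2 / N = - (2^card C) / 400"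
    using \<open>N > 0\<close> \<open>(2::real)^card C = 2 * N\<close> by (simp add: power2_eq_square field_simps)
  finally show ?thesis
    unfolding N_def by simp
qed

section \<open>Distance of the no-instances from juntas\<close>

lemma rel_dist_ge_if_many_disagreements:
  assumes "0.2 * 4^m \<le> real (card {x \<in> cube (2 * m). f x \<noteq> g x})"
  shows "0.2 \<le> rel_dist (2 * m) f g"
proof -
  have "(2::real)^(2 * m) = 4^m"
    by (simp add: power_mult)
  then show ?thesis
    using assms unfolding rel_dist_def by (simp add: field_simps)
qed

locale cube_halves =
  fixes m :: nat and A :: "nat set"
  assumes A_subset: "A \<subseteq> {..<2 * m}" and card_A: "card A = m"
begin

abbreviation C :: "nat set" where
  "C \<equiv> {..<2 * m} - A"

lemma finite_A: "finite A"
  using A_subset finite_subset by blast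

lemma card_C: "card C = m"
  using A_subset card_A finite_A by (simp add: card_Diff_subset)

lemma cube_eq: "cube (2 * m) = {x. x \<subseteq> A \<union> C}"
  using A_subset unfolding cube_def by auto

lemma noFun_eq: "noFun (2 * m) A b x = h_minus m (b (x \<inter> C)) (x \<inter> A)"
  unfolding noFun_def by simp

lemma rel_dist_noFun_ge_missing_coordinate:
  assumes "m \<ge> 10000" "c \<in> C" "c \<notin> J"
    and g: "\<And>x y. x \<in> cube (2 * m) \<Longrightarrow> y \<in> cube (2 * m) \<Longrightarrow> x \<inter> J = y \<inter> J \<Longrightarrow> g x = g y"
    and influence: "0.45 * 2^(m - 1) \<le> real (influence_count C c b)"
  shows "0.2 \<le> rel_dist (2 * m) (noFun (2 * m) A b) g"
proof (rule rel_dist_ge_if_many_disagreements)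
  define S where "S = {x. x \<subseteq> A \<union> C \<and> (c \<in> x \<inter> C \<and> b (x \<inter> C) \<noteq> b (x \<inter> C - {c}))
                          \<and> off_middle m (x \<inter> A)}"
  have card_S: "card S = influence_count C c b * card {z. z \<subseteq> A \<and> off_middle m z}"
    unfolding S_def influence_count_def by (rule card_subsets_Un_split) auto
  let ?\<sigma> = "\<lambda>x. x - {c} \<union> ({c} - x)"
  have "card S \<le> card {x \<in> cube (2 * m). noFun (2 * m) A b x \<noteq> g x}"
  proof (rule card_le_disagreements_if_swap_outside[where \<sigma> = ?\<sigma>])
    show "finite (cube (2 * m))"
      unfolding cube_def by simp
    show "S \<subseteq> cube (2 * m)"
      unfolding cube_eq S_def by auto
    fix x assume "x \<in> S"
    then have x: "x \<subseteq> A \<union> C" "c \<in> x" "b (x \<inter> C) \<noteq> b (x \<inter> C - {c})" "off_middle m (x \<inter> A)"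
      unfolding S_def by auto
    have "(x - {c}) \<inter> C = x \<inter> C - {c}" "(x - {c}) \<inter> A = x \<inter> A"
      using \<open>c \<in> C\<close> by auto
    then have "noFun (2 * m) A b x \<noteq> noFun (2 * m) A b (x - {c})"
      using h_minus_index_differ[OF x(4) x(3)] unfolding noFun_eq by simp
    moreover have "g x = g (x - {c})"
      using x(1) \<open>c \<notin> J\<close> by (intro g) (auto simp: cube_eq)
    moreover have "x - {c} \<union> ({c} - x) = x - {c}"
      using x(2) by auto
    ultimately show "?\<sigma> x \<in> cube (2 * m) - S \<and> ?\<sigma> (?\<sigma> x) = x
      \<and> noFun (2 * m) A b x \<noteq> noFun (2 * m) A b (?\<sigma> x) \<and> g x = g (?\<sigma> x)"
      using x(1,2) unfolding cube_eq S_def by auto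
  qed
  have "(4::real)^m = 2^m * 2^m"
    by (simp flip: power_mult_distrib)
  moreover have "(2::real)^m = 2 * 2^(m - 1)"
    using \<open>m \<ge> 10000\<close> by (simp flip: power_Suc)
  ultimately have "0.2 * 4^m \<le> 0.45 * 2^(m - 1) * (0.9 * (2::real)^m)"
    by simp
  also have "\<dots> \<le> real (card S)"
    unfolding card_S of_nat_mult using influence card_off_middle_subsets_ge[OF finite_A card_A \<open>m \<ge> 10000\<close>]
    by (intro mult_mono) auto
  finally show "0.2 * 4^m \<le> real (card {x \<in> cube (2 * m). noFun (2 * m) A b x \<noteq> g x})"
    using \<open>card S \<le> _\<close> by linarith
qed

lemma rel_dist_noFun_ge_complement_junta:
  assumes "m \<ge> 10000"
    and g: "\<And>x y. x \<in> cube (2 * m) \<Longrightarrow> y \<in> cube (2 * m) \<Longrightarrow> x \<inter> C = y \<inter> C \<Longrightarrow> g x = g y"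
  shows "0.2 \<le> rel_dist (2 * m) (noFun (2 * m) A b) g"
proof (rule rel_dist_ge_if_many_disagreements)
  define S where "S = {x. x \<subseteq> A \<union> C \<and> off_middle m (x \<inter> A)}"
  have "card S = card (Pow C) * card {z. z \<subseteq> A \<and> off_middle m z}"
    using card_subsets_Un_split[of A C "\<lambda>_. True"] unfolding S_def by (simp add: Pow_def)
  then have card_S: "card S = 2^m * card {z. z \<subseteq> A \<and> off_middle m z}"
    by (simp add: card_Pow card_C)
  let ?\<sigma> = "\<lambda>x. x - A \<union> (A - x)"
  have "card S \<le> 2 * card {x \<in> cube (2 * m). noFun (2 * m) A b x \<noteq> g x}"
  proof (rule card_le_twice_disagreements_if_swap[where \<sigma> = ?\<sigma>])
    show "finite (cube (2 * m))"
      unfolding cube_def by simp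
    show "S \<subseteq> cube (2 * m)"
      unfolding cube_eq S_def by auto
    fix x assume "x \<in> S"
    then have x: "x \<subseteq> A \<union> C" "off_middle m (x \<inter> A)"
      unfolding S_def by auto
    have "?\<sigma> x \<inter> C = x \<inter> C" "?\<sigma> x \<inter> A = A - x"
      by auto
    moreover have "card (x \<inter> A) + card (A - x) = m"
      using card_Int_Diff[OF finite_A, of x] card_A by (simp add: Int_commute)
    ultimately have "noFun (2 * m) A b x \<noteq> noFun (2 * m) A b (?\<sigma> x)"
      using h_minus_complement_differ[OF x(2)] unfolding noFun_eq by simp
    moreover have "g x = g (?\<sigma> x)"
      using x(1) \<open>?\<sigma> x \<inter> C = x \<inter> C\<close> by (intro g) (auto simp: cube_eq)
    ultimately show "?\<sigma> x \<in> cube (2 * m) \<and> ?\<sigma> (?\<sigma> x) = x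
      \<and> noFun (2 * m) A b x \<noteq> noFun (2 * m) A b (?\<sigma> x) \<and> g x = g (?\<sigma> x)"
      using x(1) unfolding cube_eq by auto
  qed
  have "(4::real)^m = 2^m * 2^m"
    by (simp flip: power_mult_distrib)
  then have "0.2 * 4^m \<le> (2::real)^m * (0.9 * 2^m) / 2"
    by simp
  also have "\<dots> \<le> 2^m * real (card {z. z \<subseteq> A \<and> off_middle m z}) / 2"
    using card_off_middle_subsets_ge[OF finite_A card_A \<open>m \<ge> 10000\<close>]
    by (intro divide_right_mono mult_left_mono) simp_all
  also have "\<dots> \<le> real (card {x \<in> cube (2 * m). noFun (2 * m) A b x \<noteq> g x})"
    using of_nat_mono[OF \<open>card S \<le> _\<close>, where 'a = real] unfolding card_S by simp
  finally show "0.2 * 4^m \<le> real (card {x \<in> cube (2 * m). noFun (2 * m) A b x \<noteq> g x})" .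
qed

lemma noFun_far_from_juntas:
  assumes "m \<ge> 10000" "\<forall>c\<in>C. 0.45 * 2^(m - 1) \<le> real (influence_count C c b)"
  shows "far_from_juntas (2 * m) 0.2 m (noFun (2 * m) A b)"
  unfolding far_from_juntas_def is_junta_def
proof (intro allI impI, elim exE conjE)
  fix g :: "nat set \<Rightarrow> bool" and J
  assume J: "J \<subseteq> {..<2 * m}" "card J \<le> m"
    and g: "\<forall>x\<in>cube (2 * m). \<forall>y\<in>cube (2 * m). x \<inter> J = y \<inter> J \<longrightarrow> g x = g y"
  show "0.2 \<le> rel_dist (2 * m) (noFun (2 * m) A b) g"
  proof (cases "C \<subseteq> J")
    case True
    then have "J = C"
      using card_seteq[OF finite_subset[OF J(1)] True] J(2) card_C by simp
    show ?thesis
      by (rule rel_dist_noFun_ge_complement_junta[OF assms(1)]) (use g \<open>J = C\<close> in blast)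
  next
    case False
    then obtain c where "c \<in> C" "c \<notin> J"
      by blast
    show ?thesis
      by (rule rel_dist_noFun_ge_missing_coordinate[OF assms(1) \<open>c \<in> C\<close> \<open>c \<notin> J\<close>])
        (use g assms(2) \<open>c \<in> C\<close> in blast)+
  qed
qed

lemma prob_noFun_far_ge:
  assumes "m \<ge> 10000"
  shows "1 - real m * exp (- (2^m) / 400)
           \<le> measure_pmf.prob (map_pmf (noFun (2 * m) A) (pmf_of_set (Pow C \<rightarrow>\<^sub>E (UNIV :: bool set))))
               {f. far_from_juntas (2 * m) 0.2 m f}"
proof -
  define M where "M = pmf_of_set (Pow C \<rightarrow>\<^sub>E (UNIV :: bool set))"
  define Bad where "Bad c = {b. real (influence_count C c b) < 0.45 * 2^(m - 1)}" for c
  have "measure_pmf.prob M (\<Union>c\<in>C. Bad c) \<le> (\<Sum>c\<in>C. measure_pmf.prob M (Bad c))"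
    by (rule measure_pmf.finite_measure_subadditive_finite) auto
  also have "\<dots> \<le> (\<Sum>c\<in>C. exp (- (2^m) / 400))"
    using prob_low_influence_le[of C] unfolding M_def Bad_def card_C by (intro sum_mono) simp
  also have "\<dots> = real m * exp (- (2^m) / 400)"
    using card_C by simp
  finally have "1 - real m * exp (- (2^m) / 400) \<le> measure_pmf.prob M (UNIV - (\<Union>c\<in>C. Bad c))"
    using measure_pmf.prob_compl[of "\<Union>c\<in>C. Bad c" M] by simp
  also have "\<dots> \<le> measure_pmf.prob M {b. far_from_juntas (2 * m) 0.2 m (noFun (2 * m) A b)}"
    using noFun_far_from_juntas[OF assms] unfolding Bad_def
    by (intro measure_pmf.finite_measure_mono) (auto simp: not_less)
  finally show ?thesis
    unfolding M_def by (simp add: measure_map_pmf vimage_def)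
qed

end

lemma measure_pmf_prob_bind_ge:
  assumes "\<And>x. x \<in> set_pmf M \<Longrightarrow> p \<le> measure_pmf.prob (N x) X"
  shows "p \<le> measure_pmf.prob (bind_pmf M N) X"
proof (cases "p \<le> 0")
  case True
  then show ?thesis
    by (meson measure_nonneg order_trans)
next
  case False
  have "ennreal p = (\<integral>\<^sup>+x. ennreal p \<partial>M)"
    by (simp add: measure_pmf.emeasure_space_1)
  also have "\<dots> \<le> (\<integral>\<^sup>+x. emeasure (N x) X \<partial>M)"
    using assms by (intro nn_integral_mono_AE AE_pmfI) (simp add: measure_pmf.emeasure_eq_measure)
  also have "\<dots> = emeasure (bind_pmf M N) X"
    by simp
  finally show ?thesis
    using False by (simp add: measure_pmf.emeasure_eq_measure ennreal_le_iff2)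
qed

lemma prob_D_no_far_ge:
  assumes "m \<ge> 10000"
  shows "1 - real m * exp (- (2^m) / 400) \<le> measure_pmf.prob (D_no (2 * m)) {f. far_from_juntas (2 * m) 0.2 m f}"
  unfolding D_no_def map_pmf_def[symmetric]
proof (rule measure_pmf_prob_bind_ge)
  fix A assume A: "A \<in> set_pmf (pmf_of_set {A. A \<subseteq> {..<2 * m} \<and> card A = 2 * m div 2})"
  have "{..<m} \<in> {A. A \<subseteq> {..<2 * m} \<and> card A = 2 * m div 2}"
    by auto
  then have "{A. A \<subseteq> {..<2 * m} \<and> card A = 2 * m div 2} \<noteq> {}"
    by blast
  moreover have "finite {A. A \<subseteq> {..<2 * m} \<and> card A = 2 * m div 2}"
    by (rule finite_subset[of _ "Pow {..<2 * m}"]) auto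
  ultimately have "A \<in> {A. A \<subseteq> {..<2 * m} \<and> card A = 2 * m div 2}"
    using A by (metis set_pmf_of_set)
  then have "cube_halves m A"
    by unfold_locales auto
  then show "1 - real m * exp (- (2^m) / 400)
      \<le> measure_pmf.prob (map_pmf (noFun (2 * m) A) (pmf_of_set (Pow ({..<2 * m} - A) \<rightarrow>\<^sub>E UNIV)))
          {f. far_from_juntas (2 * m) 0.2 m f}"
    using cube_halves.prob_noFun_far_ge assms by blast
qed

theorem mainTheorem12:
  shows "(\<lambda>m. measure_pmf.prob (D_no (2 * m))
            {f. far_from_juntas (2 * m) 0.2 m f}) \<longlonglongrightarrow> 1"
proof (rule tendsto_sandwich[OF _ _ _ tendsto_const])
  show "(\<lambda>m. 1 - real m * exp (- (2^m) / 400)) \<longlonglongrightarrow> 1"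
    by real_asymp
  show "\<forall>\<^sub>F m in sequentially. 1 - real m * exp (- (2^m) / 400)
          \<le> measure_pmf.prob (D_no (2 * m)) {f. far_from_juntas (2 * m) 0.2 m f}"
    using eventually_ge_at_top[of "10000 :: nat"] by eventually_elim (rule prob_D_no_far_ge)
qed simp_all

end
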